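(* Let $\langle H,T\rangle$ be an ${\cal X}_5$-interpretation and $F$ a nested expression. Then $\langle H,T\rangle\models F$ iff $H\models F^T$; and $\langle H,T\rangle=\!\!|\;F$ iff $H=\!\!|\;F^T$.
   Context: Fix a set $\mathit{At}$ of atoms. An explicit literal is $p$ or $\sim p$; a set of explicit literals is consistent if it never contains both $p$ and $\sim p$. Nested expressions: $F ::= \top\mid\bot\mid p\mid F\vee F\mid F\wedge F\mid\neg F\mid\sim F$. Classical satisfaction/falsification of nested expressions by a consistent set $T$: $T\models\top$, $T$ does not falsify $\top$, $T\not\models\bot$, $T=\!\!|\;\bot$; $T\models p$ iff $p\in T$, $T=\!\!|\;p$ iff $\sim p\in T$; $\wedge$: satisfied iff both, falsified iff at least one falsified; $\vee$: satisfied iff at least one, falsified iff both falsified; $T\models\sim\varphi$ iff $T=\!\!|\;\varphi$, $T=\!\!|\;\sim\varphi$ iff $T\models\varphi$; $T\models\neg\varphi$ iff $T\not\models\varphi$, $T=\!\!|\;\neg\varphi$ iff $T\models\varphi$. Reduct: $\top^T=\top$, $\bot^T=\bot$, $p^T=p$, $(F\wedge G)^T=F^T\wedge G^T$, $(F\vee G)^T=F^T\vee G^T$, $(\sim F)^T=\sim(F^T)$, $(\neg F)^T=\bot$ if $T\models F$, $\top$ otherwise. ${\cal X}_5$: formulas $\varphi ::= p\mid\bot\mid\varphi\wedge\varphi\mid\varphi\vee\varphi\mid\varphi\to\varphi\mid\sim\varphi$ with $\neg\varphi:=\varphi\to\bot$, $\top:=\neg\bot$ (so nested expressions are formulas). An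 ${\cal X}_5$-interpretation is a pair $\langle H,T\rangle$ of consistent sets of explicit literals with $H\subseteq T$. Satisfaction/falsification: $\langle H,T\rangle\not\models\bot$, $=\!\!|\;\bot$; $\models p$ iff $p\in H$, $=\!\!|\;p$ iff $\sim p\in H$; $\wedge,\vee,\sim$ as in the classical clauses with $\langle H,T\rangle$ in place of $T$; $\langle H,T\rangle\models\varphi\to\psi$ iff (i) $\langle H,T\rangle\not\models\varphi$ or $\langle H,T\rangle\models\psi$ and (ii) $\langle T,T\rangle\not\models\varphi$ or $\langle T,T\rangle\models\psi$; $\langle H,T\rangle=\!\!|\;\varphi\to\psi$ iff $\langle T,T\rangle\models\varphi$ and $\langle H,T\rangle=\!\!|\;\psi$. *)

theory Defs
  imports Main
begin

datatype 'a lit = Pos 'a | Neg 'a   (* p  and  ~p (explicit negation) *)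

definition consistent :: "'a lit set \<Rightarrow> bool" where
  "consistent S \<longleftrightarrow> (\<forall>p. \<not> (Pos p \<in> S \<and> Neg p \<in> S))"

datatype 'a nexp = NTop | NBot | NAtom 'a | NOr "'a nexp" "'a nexp" | NAnd "'a nexp" "'a nexp"
  | NNot "'a nexp" | NSneg "'a nexp"

fun csat :: "'a lit set \<Rightarrow> 'a nexp \<Rightarrow> bool"
and cfal :: "'a lit set \<Rightarrow> 'a nexp \<Rightarrow> bool" where
  "csat T NTop = True"
| "csat T NBot = False"
| "csat T (NAtom p) = (Pos p \<in> T)"
| "csat T (NAnd F G) = (csat T F \<and> csat T G)"
| "csat T (NOr F G) = (csat T F \<or> csat T G)"
| "csat T (NSneg F) = cfal T F"
| "csat T (NNot F) = (\<not> csat T F)"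
| "cfal T NTop = False"
| "cfal T NBot = True"
| "cfal T (NAtom p) = (Neg p \<in> T)"
| "cfal T (NAnd F G) = (cfal T F \<or> cfal T G)"
| "cfal T (NOr F G) = (cfal T F \<and> cfal T G)"
| "cfal T (NSneg F) = csat T F"
| "cfal T (NNot F) = csat T F"

fun reduct :: "'a nexp \<Rightarrow> 'a lit set \<Rightarrow> 'a nexp" where
  "reduct NTop T = NTop"
| "reduct NBot T = NBot"
| "reduct (NAtom p) T = NAtom p"
| "reduct (NAnd F G) T = NAnd (reduct F T) (reduct G T)"
| "reduct (NOr F G) T = NOr (reduct F T) (reduct G T)"
| "reduct (NSneg F) T = NSneg (reduct F T)"
| "reduct (NNot F) T = (if csat T F then NBot else NTop)"

datatype 'a form = Atom 'a | Bot | And "'a form" "'a form" | Or "'a form" "'a form"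
  | Imp "'a form" "'a form" | Sneg "'a form"

definition Neg_f :: "'a form \<Rightarrow> 'a form" where "Neg_f \<phi> = Imp \<phi> Bot"
definition Top_f :: "'a form" where "Top_f = Neg_f Bot"

fun emb :: "'a nexp \<Rightarrow> 'a form" where
  "emb NTop = Top_f"
| "emb NBot = Bot"
| "emb (NAtom p) = Atom p"
| "emb (NAnd F G) = And (emb F) (emb G)"
| "emb (NOr F G) = Or (emb F) (emb G)"
| "emb (NSneg F) = Sneg (emb F)"
| "emb (NNot F) = Neg_f (emb F)"

definition x5_interp :: "'a lit set \<Rightarrow> 'a lit set \<Rightarrow> bool" where
  "x5_interp H T \<longleftrightarrow> consistent H \<and> consistent T \<and> H \<subseteq> T"

fun xsat :: "'a lit set \<Rightarrow> 'a lit set \<Rightarrow> 'a form \<Rightarrow> bool"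
and xfal :: "'a lit set \<Rightarrow> 'a lit set \<Rightarrow> 'a form \<Rightarrow> bool" where
  "xsat H T Bot = False"
| "xsat H T (Atom p) = (Pos p \<in> H)"
| "xsat H T (And \<phi> \<psi>) = (xsat H T \<phi> \<and> xsat H T \<psi>)"
| "xsat H T (Or \<phi> \<psi>) = (xsat H T \<phi> \<or> xsat H T \<psi>)"
| "xsat H T (Sneg \<phi>) = xfal H T \<phi>"
| "xsat H T (Imp \<phi> \<psi>) = ((\<not> xsat H T \<phi> \<or> xsat H T \<psi>) \<and> (\<not> xsat T T \<phi> \<or> xsat T T \<psi>))"
| "xfal H T Bot = True"
| "xfal H T (Atom p) = (Neg p \<in> H)"
| "xfal H T (And \<phi> \<psi>) = (xfal H T \<phi> \<or> xfal H T \<psi>)"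
| "xfal H T (Or \<phi> \<psi>) = (xfal H T \<phi> \<and> xfal H T \<psi>)"
| "xfal H T (Sneg \<phi>) = xsat H T \<phi>"
| "xfal H T (Imp \<phi> \<psi>) = (xsat T T \<phi> \<and> xfal H T \<psi>)"

end

theory Submission
  imports Defs
begin

(* The only non-structural case is default negation: by persistence,
   <H,T> satisfies the implication from emb F to Bot iff <T,T> does not satisfy emb F,
   and on total interpretations <T,T> agrees with classical satisfaction by T, which is
   exactly the test the reduct of the negation performs. *)

lemma xsat_xfal_persistent:
  assumes "H \<subseteq> T"
  shows "(xsat H T \<phi> \<longrightarrow> xsat T T \<phi>) \<and> (xfal H T \<phi> \<longrightarrow> xfal T T \<phi>)"
  using assms by (induction \<phi>) auto

lemma xsat_xfal_total_emb:
  "(xsat T T (emb F) \<longleftrightarrow> csat T F) \<and> (xfal T T (emb F) \<longleftrightarrow> cfal T F)"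
  by (induction F) (auto simp: Top_f_def Neg_f_def)

lemma xsat_xfal_emb_iff_reduct:
  assumes "H \<subseteq> T"
  shows "(xsat H T (emb F) \<longleftrightarrow> csat H (reduct F T)) \<and>
         (xfal H T (emb F) \<longleftrightarrow> cfal H (reduct F T))"
proof (induction F)
  case (NNot F)
  have "xsat H T (emb (NNot F)) \<longleftrightarrow> \<not> xsat T T (emb F)"
    using xsat_xfal_persistent[OF assms, of "emb F"] by (auto simp: Neg_f_def)
  moreover have "xfal H T (emb (NNot F)) \<longleftrightarrow> xsat T T (emb F)"
    by (simp add: Neg_f_def)
  ultimately show ?case
    using xsat_xfal_total_emb[of T F] by auto
qed (auto simp: Top_f_def Neg_f_def)

theorem lemma2:
  fixes H T :: "'a lit set" and F :: "'a nexp"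
  assumes "x5_interp H T"
  shows "(xsat H T (emb F) \<longleftrightarrow> csat H (reduct F T)) \<and>
         (xfal H T (emb F) \<longleftrightarrow> cfal H (reduct F T))"
  using assms by (simp add: x5_interp_def xsat_xfal_emb_iff_reduct)

end
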